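(* Let $H\in\mathbb{C}^{n\times n}$ be PT-symmetric, i.e. there exists a matrix $P\in\mathbb{C}^{n\times n}$ with $P^{2}=I$ such that $P\bar{H}=HP$, where $\bar{H}$ is the entrywise complex conjugate of $H$. Then $H$ is pseudo-Hermitian, i.e. there exist a non-singular Hermitian matrix $G\in\mathbb{C}^{n\times n}$ and a Hermitian matrix $S\in\mathbb{C}^{n\times n}$ such that $H=-G^{-1}S$. This holds regardless of whether $H$ is diagonalizable.
   Context: Here $P$ is a (complex-linear) matrix representing a parity operator and $T$ is complex conjugation; the condition $PTH=HPT$ is equivalent to $P\bar{H}-HP=0$. Equivalently, with $A=-iH$, pseudo-Hermiticity of $H$ means $A=iG^{-1}S$ for some non-singular Hermitian $G$ and Hermitian $S$. *)

theory Defs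
  imports "HOL-Analysis.Analysis"
begin

definition mat_cnj :: "complex^'n^'m \<Rightarrow> complex^'n^'m" where
  "mat_cnj A = (\<chi> i j. cnj (A $ i $ j))"

definition mat_adjoint :: "complex^'n^'m \<Rightarrow> complex^'m^'n" where
  "mat_adjoint A = transpose (mat_cnj A)"

definition hermitian :: "complex^'n^'n \<Rightarrow> bool" where
  "hermitian A \<longleftrightarrow> mat_adjoint A = A"

end

theory Submission
  imports Defs "Jordan_Normal_Form.Jordan_Normal_Form_Existence"
begin

text \<open>
  Every complex square matrix is similar to its transpose (Jordan normal form), so the
  PT-symmetry \<open>P conj(H) P\<^sup>-\<^sup>1 = H\<close> yields an invertible \<open>X\<close> with \<open>X H = H\<^sup>* X\<close>.
  Taking adjoints, \<open>X\<^sup>*\<close> intertwines \<open>H\<close> and \<open>H\<^sup>*\<close> in the same way, hence so does every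
  linear combination of \<open>X\<close> and \<open>X\<^sup>*\<close>. The family
  \<open>G(z) = (1/2 + z/(2i)) X + (1/2 - z/(2i)) X\<^sup>*\<close> is Hermitian for real \<open>z\<close> and equals \<open>X\<close>
  at \<open>z = i\<close>, so its determinant is a non-zero polynomial in \<open>z\<close> and some real \<open>G(t)\<close> is
  invertible. With \<open>G = G(t)\<close> and \<open>S = - G H\<close>, the matrix \<open>S\<close> is Hermitian because
  \<open>G H = H\<^sup>* G\<close>, and \<open>H = - G\<^sup>-\<^sup>1 S\<close>.
\<close>

definition reversal_mat :: "nat \<Rightarrow> 'a::semiring_1 mat" where
  "reversal_mat n = Matrix.mat n n (\<lambda>(i,j). if j = n - 1 - i then 1 else 0)"

lemma reversal_mat_carrier[simp]: "reversal_mat n \<in> carrier_mat n n"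
  unfolding reversal_mat_def by auto

lemma dim_reversal_mat[simp]: "dim_row (reversal_mat n) = n" "dim_col (reversal_mat n) = n"
  unfolding reversal_mat_def by auto

lemma reversal_mat_mult_left:
  assumes B: "B \<in> carrier_mat n m" and i: "i < n" and j: "j < m"
  shows "(reversal_mat n * B) $$ (i,j) = B $$ (n - 1 - i, j)"
proof -
  have "(reversal_mat n * B) $$ (i,j) = (\<Sum>k\<in>{0..<n}. (if k = n - 1 - i then 1 else 0) * B $$ (k,j))"
    using B i j by (simp add: reversal_mat_def scalar_prod_def)
  also have "\<dots> = (\<Sum>k\<in>{0..<n}. if k = n - 1 - i then B $$ (k,j) else 0)"
    by (rule sum.cong) auto
  also have "\<dots> = B $$ (n - 1 - i, j)"
    using i by simp
  finally show ?thesis .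
qed

lemma reversal_mat_mult_right:
  assumes B: "B \<in> carrier_mat m n" and i: "i < m" and j: "j < n"
  shows "(B * reversal_mat n) $$ (i,j) = B $$ (i, n - 1 - j)"
proof -
  have "(B * reversal_mat n) $$ (i,j) = (\<Sum>k\<in>{0..<n}. B $$ (i,k) * (if j = n - 1 - k then 1 else 0))"
    using B i j by (simp add: reversal_mat_def scalar_prod_def)
  also have "\<dots> = (\<Sum>k\<in>{0..<n}. if k = n - 1 - j then B $$ (i,k) else 0)"
    using j by (intro sum.cong) auto
  also have "\<dots> = B $$ (i, n - 1 - j)"
    using j by simp
  finally show ?thesis .
qed

lemma reversal_mat_squared: "reversal_mat n * reversal_mat n = (1\<^sub>m n :: 'a::semiring_1 mat)"
proof (rule eq_matI)
  fix i j
  assume "i < dim_row (1\<^sub>m n :: 'a mat)" "j < dim_col (1\<^sub>m n :: 'a mat)"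
  then show "(reversal_mat n * reversal_mat n) $$ (i,j) = (1\<^sub>m n :: 'a mat) $$ (i,j)"
    by (subst reversal_mat_mult_left[of _ n n]) (auto simp: reversal_mat_def)
qed auto

lemma similar_mat_transpose_jordan_block:
  "similar_mat (transpose_mat (jordan_block n a)) (jordan_block n (a::'a::comm_ring_1))"
proof -
  have "transpose_mat (jordan_block n a) = reversal_mat n * jordan_block n a * reversal_mat n"
  proof (rule eq_matI)
    fix i j
    assume "i < dim_row (reversal_mat n * jordan_block n a * reversal_mat n)"
      and "j < dim_col (reversal_mat n * jordan_block n a * reversal_mat n)"
    then have ij: "i < n" "j < n"
      by auto
    have "(reversal_mat n * jordan_block n a * reversal_mat n) $$ (i,j)
        = (reversal_mat n * jordan_block n a) $$ (i, n - 1 - j)"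
      using ij by (intro reversal_mat_mult_right[where m=n]) auto
    also have "\<dots> = jordan_block n a $$ (n - 1 - i, n - 1 - j)"
      using ij by (intro reversal_mat_mult_left[where m=n]) auto
    finally show "transpose_mat (jordan_block n a) $$ (i,j)
        = (reversal_mat n * jordan_block n a * reversal_mat n) $$ (i,j)"
      using ij by auto
  qed auto
  then show ?thesis
    by (intro similar_matI[of _ _ "reversal_mat n" "reversal_mat n" n])
      (auto simp: reversal_mat_squared)
qed

lemma transpose_diag_block_mat:
  "transpose_mat (diag_block_mat As) = diag_block_mat (map transpose_mat (As :: 'a::zero mat list))"
proof (induct As)
  case Nil
  then show ?case by auto
next
  case (Cons A As)
  let ?B = "diag_block_mat As"
  have "transpose_mat (diag_block_mat (A # As)) =
    four_block_mat (transpose_mat A) (transpose_mat (0\<^sub>m (dim_row ?B) (dim_col A)))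
      (transpose_mat (0\<^sub>m (dim_row A) (dim_col ?B))) (transpose_mat ?B)"
    unfolding diag_block_mat.simps Let_def by (rule transpose_four_block_mat) auto
  also have "\<dots> = diag_block_mat (map transpose_mat (A # As))"
    using Cons by (simp add: Let_def dim_diag_block_mat o_def)
  finally show ?case .
qed

lemma similar_mat_transpose:
  assumes "similar_mat A (B :: 'a::comm_ring_1 mat)"
  shows "similar_mat (transpose_mat A) (transpose_mat B)"
proof -
  from similar_matD[OF assms] obtain n P Q where
    carrier: "{A,B,P,Q} \<subseteq> carrier_mat n n" and PQ: "P * Q = 1\<^sub>m n" "Q * P = 1\<^sub>m n"
    and A: "A = P * B * Q" by blast
  then have P: "P \<in> carrier_mat n n" and B: "B \<in> carrier_mat n n" and Q: "Q \<in> carrier_mat n n"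
    by auto
  have "transpose_mat A = transpose_mat Q * transpose_mat (P * B)"
    unfolding A using P B Q by (intro transpose_mult[of _ n n]) auto
  also have "transpose_mat (P * B) = transpose_mat B * transpose_mat P"
    using P B by (intro transpose_mult[of _ n n])
  finally have "transpose_mat A = transpose_mat Q * transpose_mat B * transpose_mat P"
    using P B Q by (simp add: assoc_mult_mat[of _ n n _ n _ n])
  moreover have "transpose_mat Q * transpose_mat P = 1\<^sub>m n" "transpose_mat P * transpose_mat Q = 1\<^sub>m n"
    using carrier PQ by (metis insert_subset transpose_mult transpose_one)+
  ultimately show ?thesis
    using carrier by (intro similar_matI[of _ _ "transpose_mat Q" "transpose_mat P" n]) auto
qed

lemma similar_mat_transpose_self:
  assumes A: "(A :: complex mat) \<in> carrier_mat n n"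
  shows "similar_mat (transpose_mat A) A"
proof -
  obtain as where "char_poly A = (\<Prod>a\<leftarrow>as. [:- a, 1:])"
    using char_poly_factorized[OF A] by auto
  from jordan_nf_exists[OF A this] obtain n_as where "jordan_nf A n_as" ..
  then have sim: "similar_mat A (jordan_matrix n_as)"
    unfolding jordan_nf_def by auto
  let ?Ms = "map (\<lambda>(n,a). (transpose_mat (jordan_block n a), jordan_block n a)) n_as"
  have "similar_mat (diag_block_mat (map fst ?Ms)) (diag_block_mat (map snd ?Ms))"
    by (rule similar_diag_mat_block_mat) (auto simp: similar_mat_transpose_jordan_block)
  moreover have "transpose_mat (jordan_matrix n_as) = diag_block_mat (map fst ?Ms)"
    by (simp add: jordan_matrix_def transpose_diag_block_mat o_def case_prod_beta)
  moreover have "jordan_matrix n_as = diag_block_mat (map snd ?Ms)"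
    by (simp add: jordan_matrix_def o_def case_prod_beta')
  ultimately have "similar_mat (transpose_mat (jordan_matrix n_as)) (jordan_matrix n_as)"
    by simp
  with similar_mat_transpose[OF sim] sim show ?thesis
    using similar_mat_trans similar_mat_sym by blast
qed

hide_const (open) Matrix.mat Determinant.det Schur_Decomposition.mat_adjoint
hide_fact (open) Matrix.vec_eq_iff Determinant.det_def Schur_Decomposition.mat_adjoint_def
no_notation Matrix.vec_index (infixl \<open>$\<close> 100)

definition hma_index :: "'n::finite \<Rightarrow> nat" where
  "hma_index = (SOME h. bij_betw h (UNIV :: 'n set) {0..<CARD('n)})"

lemma bij_betw_hma_index: "bij_betw (hma_index :: 'n::finite \<Rightarrow> nat) UNIV {0..<CARD('n)}"
proof -
  have "\<exists>h. bij_betw h (UNIV :: 'n set) {0..<CARD('n)}"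
    by (rule ex_bij_betw_finite_nat) simp
  then show ?thesis
    unfolding hma_index_def by (rule someI_ex)
qed

lemma hma_index_less[simp]: "hma_index (i::'n::finite) < CARD('n)"
  using bij_betw_hma_index[where 'n='n] by (auto simp: bij_betw_def)

lemma inj_hma_index: "inj (hma_index :: 'n::finite \<Rightarrow> nat)"
  using bij_betw_hma_index[where 'n='n] by (auto simp: bij_betw_def)

definition from_hma :: "'a^'n::finite^'n \<Rightarrow> 'a mat" where
  "from_hma A = Matrix.mat CARD('n) CARD('n)
     (\<lambda>(i,j). A $ inv_into UNIV hma_index i $ inv_into UNIV hma_index j)"

definition to_hma :: "'a mat \<Rightarrow> 'a^'n::finite^'n" where
  "to_hma M = (\<chi> i j. M $$ (hma_index i, hma_index j))"

lemma from_hma_carrier: "from_hma (A :: 'a^'n::finite^'n) \<in> carrier_mat CARD('n) CARD('n)"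
  unfolding from_hma_def by auto

lemma to_hma_from_hma[simp]: "to_hma (from_hma A) = (A :: 'a^'n::finite^'n)"
  unfolding from_hma_def to_hma_def by (simp add: vec_eq_iff inv_into_f_f[OF inj_hma_index])

lemma to_hma_mult:
  assumes "X \<in> carrier_mat CARD('n) CARD('n)" and "Y \<in> carrier_mat CARD('n) CARD('n)"
  shows "(to_hma (X * Y) :: 'a::semiring_1^'n::finite^'n) = to_hma X ** to_hma Y"
proof -
  have "(X * Y) $$ (hma_index i, hma_index j)
      = (\<Sum>k::'n\<in>UNIV. X $$ (hma_index i, hma_index k) * Y $$ (hma_index k, hma_index j))"
    for i j :: 'n
  proof -
    have "(X * Y) $$ (hma_index i, hma_index j)
        = (\<Sum>k\<in>{0..<CARD('n)}. X $$ (hma_index i, k) * Y $$ (k, hma_index j))"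
      using assms by (simp add: scalar_prod_def)
    also have "\<dots> = (\<Sum>k::'n\<in>UNIV. X $$ (hma_index i, hma_index k) * Y $$ (hma_index k, hma_index j))"
      by (rule sum.reindex_bij_betw[OF bij_betw_hma_index, symmetric])
    finally show ?thesis .
  qed
  then show ?thesis
    unfolding to_hma_def matrix_matrix_mult_def by (simp add: vec_eq_iff)
qed

lemma to_hma_transpose_mat:
  assumes "X \<in> carrier_mat CARD('n) CARD('n)"
  shows "(to_hma (transpose_mat X) :: 'a^'n::finite^'n) = transpose (to_hma X)"
  using assms unfolding to_hma_def transpose_def by (simp add: vec_eq_iff)

lemma to_hma_one: "(to_hma (1\<^sub>m CARD('n)) :: 'a::semiring_1^'n::finite^'n) = mat 1"
  unfolding to_hma_def Finite_Cartesian_Product.mat_def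
  by (simp add: vec_eq_iff inj_eq[OF inj_hma_index])

lemma similar_transpose_hma:
  fixes A :: "complex^'n::finite^'n"
  shows "\<exists>Q. invertible Q \<and> Q ** A = transpose A ** Q"
proof -
  let ?n = "CARD('n)"
  have A: "from_hma A \<in> carrier_mat ?n ?n"
    by (rule from_hma_carrier)
  from similar_matD[OF similar_mat_transpose_self[OF A]] obtain m P Q where
    carrier: "{transpose_mat (from_hma A), from_hma A, P, Q} \<subseteq> carrier_mat m m"
    and PQ: "P * Q = 1\<^sub>m m" "Q * P = 1\<^sub>m m"
    and similar: "transpose_mat (from_hma A) = P * from_hma A * Q" by blast
  have "m = ?n"
    using carrier A by auto
  then have P: "P \<in> carrier_mat ?n ?n" and Q: "Q \<in> carrier_mat ?n ?n"
    using carrier by auto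
  define P' :: "complex^'n^'n" where "P' = to_hma P"
  define Q' :: "complex^'n^'n" where "Q' = to_hma Q"
  have P'Q': "P' ** Q' = mat 1" "Q' ** P' = mat 1"
    unfolding P'_def Q'_def using PQ \<open>m = ?n\<close> P Q by (simp_all flip: to_hma_mult add: to_hma_one)
  have "transpose A = to_hma (transpose_mat (from_hma A))"
    by (simp add: to_hma_transpose_mat[OF A])
  also have "\<dots> = P' ** A ** Q'"
    unfolding similar P'_def Q'_def using P Q A by (simp add: to_hma_mult matrix_mul_assoc)
  finally have "transpose A ** P' = P' ** A ** (Q' ** P')"
    by (simp add: matrix_mul_assoc)
  then have "P' ** A = transpose A ** P'"
    using P'Q' by simp
  moreover have "invertible P'"
    unfolding invertible_def using P'Q' by blast
  ultimately show ?thesis by blast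
qed

lemma mat_adjoint_nth[simp]: "mat_adjoint A $ i $ j = cnj (A $ j $ i)"
  unfolding mat_adjoint_def mat_cnj_def transpose_def by simp

lemma mat_adjoint_adjoint[simp]: "mat_adjoint (mat_adjoint A) = A"
  by (simp add: vec_eq_iff)

lemma mat_adjoint_mult: "mat_adjoint (A ** B) = mat_adjoint B ** mat_adjoint A"
  by (simp add: vec_eq_iff matrix_matrix_mult_def cnj_sum mult.commute)

lemma matrix_mul_minus_right: "A ** (- B) = - (A ** (B :: 'a::ring_1^'n^'m))"
  by (simp add: vec_eq_iff matrix_matrix_mult_def sum_negf)

lemma invertible_transpose:
  fixes A :: "'a::comm_semiring_1^'n^'n"
  assumes "invertible A"
  shows "invertible (transpose A)"
  using assms unfolding invertible_def by (metis matrix_transpose_mul transpose_mat)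

lemma matrix_inv_mult_self:
  assumes "invertible A"
  shows "matrix_inv A ** A = mat 1"
  using assms unfolding invertible_def matrix_inv_def by (metis (mono_tags, lifting) someI_ex)

lemma poly_det: "poly (det M) z = det (map_matrix (\<lambda>p. poly p z) M)"
  for M :: "'a::comm_ring_1 poly^'n^'n"
  unfolding det_def by (simp add: poly_sum poly_prod)

lemma ex_real_not_root:
  fixes q :: "complex poly"
  assumes "q \<noteq> 0"
  shows "\<exists>r::real. poly q (of_real r) \<noteq> 0"
proof -
  have "infinite (range (of_real :: real \<Rightarrow> complex))"
    by (simp add: range_inj_infinite inj_on_def infinite_UNIV_char_0)
  then show ?thesis
    using finite_subset[OF _ poly_roots_finite[OF assms]] by blast
qed

lemma lin_comb_intertwines:
  fixes X Y H K :: "'a::comm_ring_1^'n^'n"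
  assumes "X ** H = K ** X" and "Y ** H = K ** Y"
  shows "(\<chi> i j. a * X$i$j + b * Y$i$j) ** H = K ** (\<chi> i j. a * X$i$j + b * Y$i$j)"
proof -
  have XH: "(\<Sum>k\<in>UNIV. X$i$k * H$k$j) = (\<Sum>k\<in>UNIV. K$i$k * X$k$j)" for i j
    using arg_cong[OF assms(1), of "\<lambda>M. M$i$j"] unfolding matrix_matrix_mult_def by simp
  have YH: "(\<Sum>k\<in>UNIV. Y$i$k * H$k$j) = (\<Sum>k\<in>UNIV. K$i$k * Y$k$j)" for i j
    using arg_cong[OF assms(2), of "\<lambda>M. M$i$j"] unfolding matrix_matrix_mult_def by simp
  have "(\<Sum>k\<in>UNIV. (a * X$i$k + b * Y$i$k) * H$k$j)
      = a * (\<Sum>k\<in>UNIV. X$i$k * H$k$j) + b * (\<Sum>k\<in>UNIV. Y$i$k * H$k$j)" for i j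
    by (simp add: sum.distrib sum_distrib_left algebra_simps)
  moreover have "(\<Sum>k\<in>UNIV. K$i$k * (a * X$k$j + b * Y$k$j))
      = a * (\<Sum>k\<in>UNIV. K$i$k * X$k$j) + b * (\<Sum>k\<in>UNIV. K$i$k * Y$k$j)" for i j
    by (simp add: sum.distrib sum_distrib_left algebra_simps)
  ultimately show ?thesis
    unfolding matrix_matrix_mult_def by (simp add: vec_eq_iff XH YH)
qed

lemma ex_adjoint_intertwiner_if_similar_cnj:
  fixes H P :: "complex^'n^'n"
  assumes "invertible P" and "P ** mat_cnj H = H ** P"
  shows "\<exists>X. invertible X \<and> X ** H = mat_adjoint H ** X"
proof -
  obtain Q where Q: "invertible Q" "Q ** H = transpose H ** Q"
    using similar_transpose_hma by blast
  have adjoint: "mat_adjoint H ** transpose P = transpose P ** transpose H"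
    using arg_cong[OF assms(2), of transpose] by (simp add: mat_adjoint_def matrix_transpose_mul)
  have "transpose P ** Q ** H = transpose P ** (transpose H ** Q)"
    by (simp add: Q(2) flip: matrix_mul_assoc)
  also have "\<dots> = mat_adjoint H ** (transpose P ** Q)"
    by (simp add: adjoint matrix_mul_assoc)
  finally show ?thesis
    using invertible_mult[OF invertible_transpose[OF assms(1)] Q(1)] by blast
qed

lemma ex_hermitian_adjoint_intertwiner:
  fixes H X :: "complex^'n^'n"
  assumes "invertible X" and XH: "X ** H = mat_adjoint H ** X"
  shows "\<exists>G. invertible G \<and> hermitian G \<and> G ** H = mat_adjoint H ** G"
proof -
  define Y where "Y = mat_adjoint X"
  have YH: "Y ** H = mat_adjoint H ** Y"
    using arg_cong[OF XH, of mat_adjoint] by (simp add: Y_def mat_adjoint_mult)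
  define G where "G z = (\<chi> i j. (1/2 + z / (2*\<i>)) * X$i$j + (1/2 - z / (2*\<i>)) * Y$i$j)" for z
  define M :: "complex poly^'n^'n"
    where "M = (\<chi> i j. [:(X$i$j + Y$i$j) / 2, (X$i$j - Y$i$j) / (2*\<i>):])"
  have det_G: "det (G z) = poly (det M) z" for z
    unfolding poly_det by (rule arg_cong[of _ _ det]) (simp add: G_def M_def vec_eq_iff field_simps)
  have "G \<i> = X"
    by (simp add: G_def vec_eq_iff)
  then have "poly (det M) \<i> \<noteq> 0"
    using assms(1) det_G by (metis invertible_det_nz)
  then obtain t :: real where "poly (det M) (of_real t) \<noteq> 0"
    using ex_real_not_root by (metis poly_0)
  then have "invertible (G t)"
    by (simp add: invertible_det_nz det_G)
  moreover have "hermitian (G t)"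
    by (simp add: hermitian_def G_def Y_def vec_eq_iff field_simps)
  moreover have "G t ** H = mat_adjoint H ** G t"
    unfolding G_def by (rule lin_comb_intertwines[OF XH YH])
  ultimately show ?thesis by blast
qed

lemma pseudo_hermitian_if_hermitian_adjoint_intertwiner:
  fixes G H :: "complex^'n^'n"
  assumes "invertible G" and "hermitian G" and GH: "G ** H = mat_adjoint H ** G"
  shows "\<exists>G S :: complex^'n^'n. invertible G \<and> hermitian G \<and> hermitian S
           \<and> H = - (matrix_inv G ** S)"
proof -
  define S where "S = - (G ** H)"
  have "mat_adjoint S = - (mat_adjoint H ** mat_adjoint G)"
    by (simp add: S_def flip: mat_adjoint_mult) (simp add: vec_eq_iff)
  then have "hermitian S"
    using \<open>hermitian G\<close> by (simp add: hermitian_def S_def GH)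
  moreover have "H = - (matrix_inv G ** S)"
    by (simp add: S_def matrix_mul_minus_right matrix_mul_assoc matrix_inv_mult_self[OF assms(1)])
  ultimately show ?thesis
    using assms(1,2) by blast
qed

theorem corollary1:
  fixes H P :: "complex^'n^'n"
  assumes "P ** P = mat 1"
    and "P ** mat_cnj H = H ** P"
  shows "\<exists>G S :: complex^'n^'n. invertible G \<and> hermitian G \<and> hermitian S
           \<and> H = - (matrix_inv G ** S)"
proof -
  have "invertible P"
    using assms(1) unfolding invertible_def by blast
  then obtain X where "invertible X" "X ** H = mat_adjoint H ** X"
    using ex_adjoint_intertwiner_if_similar_cnj assms(2) by blast
  then obtain G where "invertible G" "hermitian G" "G ** H = mat_adjoint H ** G"
    using ex_hermitian_adjoint_intertwiner by blast
  then show ?thesis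
    by (rule pseudo_hermitian_if_hermitian_adjoint_intertwiner)
qed

end
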